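(* Let $R$ be a ring, $\mathfrak a\in\mathrm{Ass}_l(R)$, $S\in\mathrm{Den}_l(R,\mathfrak a)$ and $A=S^{-1}R$. Then $A=Q_{\mathfrak a}(R)$ (i.e. the natural ring homomorphism $S^{-1}R\to S_{\mathfrak a}(R)^{-1}R$, $s^{-1}r\mapsto s^{-1}r$, is an isomorphism) if and only if $Q_l(A)=A$ (i.e. the natural embedding $A\to Q_l(A)$ is an isomorphism).
   Context: Rings are associative with $1$. A multiplicatively closed subset $S$ ($1\in S$, $0\notin S$) is a left Ore set if $Sr\cap Rs\ne\emptyset$ for all $r\in R,s\in S$; $\mathrm{ass}(S):=\{r\mid sr=0\text{ for some }s\in S\}$; it is a left denominator set if moreover $rs=0$ ($s\in S$) implies $tr=0$ for some $t\in S$. $\mathrm{Den}_l(R)$ is the set of left denominator sets, $\mathrm{Ass}_l(R)=\{\mathrm{ass}(S)\mid S\in\mathrm{Den}_l(R)\}$, $\mathrm{Den}_l(R,\mathfrak a)=\{S\mid\mathrm{ass}(S)=\mathfrak a\}$; $S_{\mathfrak a}(R)$ is the largest element of $\mathrm{Den}_l(R,\mathfrak a)$ and $Q_{\mathfrak a}(R):=S_{\mathfrak a}(R)^{-1}R$. For a ring $B$, $Q_l(B):=S_0(B)^{-1}B$ where $S_0(B)$ is the largest element of $\mathrm{Den}_l(B,0)$. *)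

theory Defs
  imports Main
begin

definition mult_closed :: "'a::ring_1 set \<Rightarrow> bool" where
  "mult_closed S \<longleftrightarrow> 1 \<in> S \<and> 0 \<notin> S \<and> (\<forall>s\<in>S. \<forall>t\<in>S. s * t \<in> S)"

definition left_ore :: "'a::ring_1 set \<Rightarrow> bool" where
  "left_ore S \<longleftrightarrow> mult_closed S \<and>
     (\<forall>r. \<forall>s\<in>S. \<exists>s'\<in>S. \<exists>r'. s' * r = r' * s)"

definition ass :: "'a::ring_1 set \<Rightarrow> 'a set" where
  "ass S = {r. \<exists>s\<in>S. s * r = 0}"

definition left_den :: "'a::ring_1 set \<Rightarrow> bool" where
  "left_den S \<longleftrightarrow> left_ore S \<and>
     (\<forall>r. \<forall>s\<in>S. r * s = 0 \<longrightarrow> (\<exists>t\<in>S. t * r = 0))"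

text \<open>Den_l(R): the left denominator sets of the ring (the ring is the whole type).\<close>
definition Den_l :: "'a::ring_1 set set" where
  "Den_l = {S. left_den S}"

definition Ass_l :: "'a::ring_1 set set" where
  "Ass_l = ass ` Den_l"

definition Den_l_at :: "'a::ring_1 set \<Rightarrow> 'a set set" where
  "Den_l_at \<aa> = {S \<in> Den_l. ass S = \<aa>}"

definition S_max :: "'a::ring_1 set \<Rightarrow> 'a set" where
  "S_max \<aa> = (THE S. S \<in> Den_l_at \<aa> \<and> (\<forall>T\<in>Den_l_at \<aa>. T \<subseteq> S))"

abbreviation S_0 :: "'a::ring_1 set" where
  "S_0 \<equiv> S_max {0}"

definition ring_hom1 :: "('a::ring_1 \<Rightarrow> 'b::ring_1) \<Rightarrow> bool" where
  "ring_hom1 f \<longleftrightarrow> f 1 = 1 \<and> (\<forall>x y. f (x + y) = f x + f y) \<and> (\<forall>x y. f (x * y) = f x * f y)"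

definition ring_iso1 :: "('a::ring_1 \<Rightarrow> 'b::ring_1) \<Rightarrow> bool" where
  "ring_iso1 f \<longleftrightarrow> ring_hom1 f \<and> bij f"

text \<open>sigma : R -> Q is a left ring of fractions (left localization) of R at S,
  i.e. Q = S^{-1}R with its natural map: sigma is a ring homomorphism, the images of
  elements of S are units, every element is sigma(s)^{-1} sigma(r), and
  ker sigma = ass(S).\<close>
definition left_loc :: "('a::ring_1 \<Rightarrow> 'b::ring_1) \<Rightarrow> 'a set \<Rightarrow> bool" where
  "left_loc \<sigma> S \<longleftrightarrow> ring_hom1 \<sigma> \<and>
     (\<forall>s\<in>S. \<exists>u. u * \<sigma> s = 1 \<and> \<sigma> s * u = 1) \<and>
     (\<forall>q. \<exists>s\<in>S. \<exists>r. \<sigma> s * q = \<sigma> r) \<and>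
     (\<forall>r. \<sigma> r = 0 \<longleftrightarrow> r \<in> ass S)"

end

theory Submission
  imports Defs
begin

text \<open>Write \<open>A = S\<^sup>-\<^sup>1R\<close>, \<open>T = S\<^sub>\<aa>(R)\<close> and \<open>W = S\<^sub>0(A)\<close>; then \<open>S \<subseteq> T\<close>. By the universal
  property of left localizations, \<open>A \<rightarrow> T\<^sup>-\<^sup>1R\<close> is an isomorphism iff every \<open>\<sigma>(t)\<close>, \<open>t \<in> T\<close>, is a
  unit of \<open>A\<close>, and \<open>A \<rightarrow> W\<^sup>-\<^sup>1A\<close> is an isomorphism iff every element of \<open>W\<close> is a unit. Now
  \<open>\<sigma>(T)\<close> is a left denominator set of \<open>A\<close> with trivial annihilator, so \<open>\<sigma>(T) \<subseteq> W\<close>; and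
  \<open>\<sigma>\<^sup>-\<^sup>1(W)\<close> is a left denominator set of \<open>R\<close> with annihilator \<open>\<aa>\<close>, so \<open>\<sigma>\<^sup>-\<^sup>1(W) \<subseteq> T\<close>.
  Hence if \<open>\<sigma>(T)\<close> consists of units, so does \<open>W\<close>: each \<open>w \<in> W\<close> is \<open>\<sigma>(s)\<^sup>-\<^sup>1\<sigma>(r)\<close> with
  \<open>\<sigma>(r) \<in> W\<close>, i.e. \<open>r \<in> T\<close>.\<close>

section \<open>Units and ring homomorphisms\<close>

definition invertible :: "'a::ring_1 \<Rightarrow> bool" where
  "invertible x \<longleftrightarrow> (\<exists>u. u * x = 1 \<and> x * u = 1)"

lemma invertible_one [simp]: "invertible 1"
  unfolding invertible_def by auto

lemma invertible_mult:
  assumes "invertible x" "invertible y"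
  shows "invertible (x * y)"
proof -
  obtain u v where u: "u * x = 1" "x * u = 1" and v: "v * y = 1" "y * v = 1"
    using assms unfolding invertible_def by blast
  have "(v * u) * (x * y) = v * (u * x) * y" "(x * y) * (v * u) = x * (y * v) * u"
    by (simp_all add: mult.assoc)
  with u v have "(v * u) * (x * y) = 1" "(x * y) * (v * u) = 1" by simp_all
  then show ?thesis unfolding invertible_def by blast
qed

lemma invertible_cancel_left:
  assumes "invertible x"
  shows "x * a = x * b \<longleftrightarrow> a = b"
proof
  obtain u where u: "u * x = 1" using assms unfolding invertible_def by blast
  assume "x * a = x * b"
  then have "(u * x) * a = (u * x) * b" by (simp add: mult.assoc)
  with u show "a = b" by simp
qed simp

lemma invertible_cancel_right:
  assumes "invertible x"
  shows "a * x = b * x \<longleftrightarrow> a = b"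
proof
  obtain u where u: "x * u = 1" using assms unfolding invertible_def by blast
  assume "a * x = b * x"
  then have "a * (x * u) = b * (x * u)" by (simp add: mult.assoc[symmetric])
  with u show "a = b" by simp
qed simp

lemma invertible_mult_eq_0_iff:
  assumes "invertible x"
  shows "x * a = 0 \<longleftrightarrow> a = 0" "a * x = 0 \<longleftrightarrow> a = 0"
  using invertible_cancel_left[OF assms, of a 0] invertible_cancel_right[OF assms, of a 0] by simp_all

lemma invertible_right_factor:
  assumes "invertible x" "invertible (x * w)"
  shows "invertible w"
proof -
  obtain u where u: "u * x = 1" "x * u = 1" using assms(1) unfolding invertible_def by blast
  then have "invertible u" unfolding invertible_def by blast
  then have "invertible (u * (x * w))" using assms(2) by (rule invertible_mult)
  moreover have "u * (x * w) = w" using u(1) by (simp add: mult.assoc[symmetric])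
  ultimately show ?thesis by simp
qed

lemma ring_hom1_eqs:
  assumes "ring_hom1 f"
  shows "f 1 = 1" "f (x + y) = f x + f y" "f (x * y) = f x * f y"
    and "f 0 = 0" "f (x - y) = f x - f y"
proof -
  show h: "f 1 = 1" "f (x + y) = f x + f y" "f (x * y) = f x * f y" for x y
    using assms unfolding ring_hom1_def by auto
  show "f 0 = 0" using h(2)[of 0 0] by simp
  show "f (x - y) = f x - f y" using h(2)[of "x - y" y] by (simp add: eq_diff_eq)
qed

lemma ring_hom1_id: "ring_hom1 id"
  unfolding ring_hom1_def by simp

lemma ring_hom1_comp: "ring_hom1 f \<Longrightarrow> ring_hom1 g \<Longrightarrow> ring_hom1 (g \<circ> f)"
  unfolding ring_hom1_def by simp

lemma ring_hom1_invertible: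
  assumes "ring_hom1 f" "invertible x"
  shows "invertible (f x)"
proof -
  obtain u where "u * x = 1" "x * u = 1" using assms(2) unfolding invertible_def by blast
  then have "f u * f x = 1" "f x * f u = 1" by (simp_all add: ring_hom1_eqs[OF assms(1), symmetric])
  then show ?thesis unfolding invertible_def by blast
qed

lemma ring_hom1_injI:
  assumes "ring_hom1 f" "\<And>x. f x = 0 \<Longrightarrow> x = 0"
  shows "inj f"
proof (rule injI)
  fix x y assume "f x = f y"
  then have "f (x - y) = 0" by (simp add: ring_hom1_eqs[OF assms(1)])
  then show "x = y" using assms(2)[of "x - y"] by simp
qed

lemma ring_iso1_invertible_iff:
  assumes "ring_iso1 f"
  shows "invertible (f x) \<longleftrightarrow> invertible x"
proof
  have hom: "ring_hom1 f" and bij: "bij f" using assms unfolding ring_iso1_def by auto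
  assume "invertible (f x)"
  then obtain u where u: "u * f x = 1" "f x * u = 1" unfolding invertible_def by blast
  obtain v where "u = f v" using bij by (meson bij_pointE)
  with u have "f (v * x) = f 1" "f (x * v) = f 1" by (simp_all add: ring_hom1_eqs[OF hom])
  then have "v * x = 1" "x * v = 1" using bij_is_inj[OF bij] by (simp_all add: inj_eq)
  then show "invertible x" unfolding invertible_def by blast
next
  show "invertible x \<Longrightarrow> invertible (f x)"
    using assms ring_hom1_invertible unfolding ring_iso1_def by blast
qed

section \<open>Left denominator sets\<close>

lemma left_oreD:
  assumes "left_ore V"
  shows "1 \<in> V" "0 \<notin> V" "s \<in> V \<Longrightarrow> t \<in> V \<Longrightarrow> s * t \<in> V"
    and "s \<in> V \<Longrightarrow> \<exists>s'\<in>V. \<exists>r'. s' * r = r' * s"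
  using assms unfolding left_ore_def mult_closed_def by auto

lemma left_oreI:
  assumes "1 \<in> V" "0 \<notin> V" "\<And>s t. s \<in> V \<Longrightarrow> t \<in> V \<Longrightarrow> s * t \<in> V"
    and "\<And>r s. s \<in> V \<Longrightarrow> \<exists>s'\<in>V. \<exists>r'. s' * r = r' * s"
  shows "left_ore V"
  using assms unfolding left_ore_def mult_closed_def by auto

lemma Den_l_at_iff:
  "V \<in> Den_l_at \<aa> \<longleftrightarrow> left_ore V \<and> (\<forall>r. \<forall>s\<in>V. r * s = 0 \<longrightarrow> (\<exists>t\<in>V. t * r = 0))
     \<and> (\<forall>r. r \<in> \<aa> \<longleftrightarrow> (\<exists>s\<in>V. s * r = 0))"
  unfolding Den_l_at_def Den_l_def left_den_def ass_def by auto

lemma Den_l_atD: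
  assumes "V \<in> Den_l_at \<aa>"
  shows "left_ore V" "s \<in> V \<Longrightarrow> r * s = 0 \<Longrightarrow> \<exists>t\<in>V. t * r = 0"
    and "r \<in> \<aa> \<longleftrightarrow> (\<exists>s\<in>V. s * r = 0)"
  using assms unfolding Den_l_at_iff by blast+

lemma Den_l_at_ass: "V \<in> Den_l_at \<aa> \<Longrightarrow> ass V = \<aa>"
  unfolding Den_l_at_def by simp

lemma Den_l_at_zero_iff:
  "V \<in> Den_l_at {0} \<longleftrightarrow> left_ore V \<and> (\<forall>v\<in>V. \<forall>b. v * b = 0 \<or> b * v = 0 \<longrightarrow> b = 0)"
proof
  assume V: "V \<in> Den_l_at {0}"
  show "left_ore V \<and> (\<forall>v\<in>V. \<forall>b. v * b = 0 \<or> b * v = 0 \<longrightarrow> b = 0)"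
    using Den_l_atD[OF V] by blast
next
  assume V: "left_ore V \<and> (\<forall>v\<in>V. \<forall>b. v * b = 0 \<or> b * v = 0 \<longrightarrow> b = 0)"
  then have "1 \<in> V" using left_oreD(1) by blast
  with V show "V \<in> Den_l_at {0}" unfolding Den_l_at_iff by (metis mult_1_left singletonD singletonI)
qed

lemma invertibles_Den_l_at_zero:
  assumes "(1::'a::ring_1) \<noteq> 0"
  shows "{x::'a. invertible x} \<in> Den_l_at {0}"
  unfolding Den_l_at_zero_iff
proof (intro conjI ballI allI impI left_oreI)
  show "0 \<notin> {x::'a. invertible x}" using assms unfolding invertible_def by simp
  show "\<exists>s'\<in>{x. invertible x}. \<exists>r'. s' * r = r' * s" if s: "s \<in> {x. invertible x}" for r s :: 'a
  proof -
    obtain u where "u * s = 1" using s unfolding invertible_def by blast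
    then have "1 * r = (r * u) * s" by (simp add: mult.assoc)
    then show ?thesis using invertible_one by blast
  qed
  show "b = 0" if "v \<in> {x. invertible x}" "v * b = 0 \<or> b * v = 0" for v b :: 'a
    using that invertible_mult_eq_0_iff[of v b] by auto
qed (auto intro: invertible_mult)

section \<open>The largest left denominator set with a given annihilator\<close>

inductive_set monoid_closure :: "'a::monoid_mult set \<Rightarrow> 'a set" for U where
  one: "1 \<in> monoid_closure U"
| mult: "u \<in> U \<Longrightarrow> m \<in> monoid_closure U \<Longrightarrow> u * m \<in> monoid_closure U"

lemma monoid_closure_mult:
  "m \<in> monoid_closure U \<Longrightarrow> n \<in> monoid_closure U \<Longrightarrow> m * n \<in> monoid_closure U"
  by (induction m rule: monoid_closure.induct)
    (auto simp: mult.assoc intro: monoid_closure.intros)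

lemma monoid_closure_superset: "U \<subseteq> monoid_closure U"
  using monoid_closure.mult[OF _ monoid_closure.one] by fastforce

lemma monoid_closure_left_ore:
  fixes U :: "'a::ring_1 set"
  assumes "\<And>u r. u \<in> U \<Longrightarrow> \<exists>v\<in>monoid_closure U. \<exists>r'. v * r = r' * u"
    and "m \<in> monoid_closure U"
  shows "\<exists>v\<in>monoid_closure U. \<exists>r'. v * r = r' * m"
  using assms(2)
proof (induction m arbitrary: r rule: monoid_closure.induct)
  case one
  show ?case using monoid_closure.one by force
next
  case (mult u m)
  obtain v r' where v: "v \<in> monoid_closure U" "v * r = r' * m" using mult.IH by blast
  obtain v' r'' where v': "v' \<in> monoid_closure U" "v' * r' = r'' * u" using assms(1) mult.hyps(1) by blast
  have "(v' * v) * r = (v' * r') * m" using v(2) by (simp add: mult.assoc)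
  also have "\<dots> = r'' * (u * m)" using v'(2) by (simp add: mult.assoc)
  finally have "(v' * v) * r = r'' * (u * m)" .
  then show ?case using monoid_closure_mult[OF v'(1) v(1)] by blast
qed

lemma monoid_closure_left_den:
  fixes U :: "'a::ring_1 set"
  assumes "\<And>u r. u \<in> U \<Longrightarrow> r * u = 0 \<Longrightarrow> \<exists>v\<in>monoid_closure U. v * r = 0"
    and "m \<in> monoid_closure U" "r * m = 0"
  shows "\<exists>v\<in>monoid_closure U. v * r = 0"
  using assms(2,3)
proof (induction m arbitrary: r rule: monoid_closure.induct)
  case one
  then show ?case using monoid_closure.one by force
next
  case (mult u m)
  obtain v where v: "v \<in> monoid_closure U" "v * (r * u) = 0"
    using mult.IH[of "r * u"] mult.prems by (auto simp: mult.assoc)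
  then have "(v * r) * u = 0" by (simp add: mult.assoc)
  obtain v' where v': "v' \<in> monoid_closure U" "(v' * v) * r = 0"
    using assms(1)[OF mult.hyps(1) \<open>(v * r) * u = 0\<close>] by (auto simp: mult.assoc)
  then show ?case using monoid_closure_mult[OF v'(1) v(1)] by blast
qed

lemma monoid_closure_cancel:
  assumes "\<And>u x. u \<in> U \<Longrightarrow> u * x \<in> I \<Longrightarrow> x \<in> I"
    and "m \<in> monoid_closure U" "m * x \<in> I"
  shows "x \<in> I"
  using assms(2,3)
proof (induction m arbitrary: x rule: monoid_closure.induct)
  case (mult u m)
  then show ?case using assms(1)[of u "m * x"] by (simp add: mult.assoc)
qed simp

text \<open>The multiplicative closure of the union is again a left denominator set with
  annihilator \<open>\<aa>\<close>, hence contained in the union.\<close>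
lemma Union_Den_l_at:
  assumes "S \<in> Den_l_at \<aa>"
  shows "\<Union>(Den_l_at \<aa>) \<in> Den_l_at \<aa>"
proof -
  let ?U = "\<Union>(Den_l_at \<aa>)"
  let ?M = "monoid_closure ?U"
  have sub_M: "X \<subseteq> ?M" if "X \<in> Den_l_at \<aa>" for X
    using that monoid_closure_superset by blast
  have cancel: "x \<in> \<aa>" if u: "u \<in> ?U" and ux: "u * x \<in> \<aa>" for u x
  proof -
    from u obtain X where X: "X \<in> Den_l_at \<aa>" "u \<in> X" by blast
    obtain s where s: "s \<in> X" "s * (u * x) = 0" using ux Den_l_atD(3)[OF X(1)] by blast
    have "s * u \<in> X" using left_oreD(3)[OF Den_l_atD(1)[OF X(1)] s(1) X(2)] .
    moreover have "(s * u) * x = 0" using s(2) by (simp add: mult.assoc)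
    ultimately show ?thesis using Den_l_atD(3)[OF X(1)] by blast
  qed
  have zero_in: "0 \<in> \<aa>"
    using Den_l_atD(3)[OF assms] left_oreD(1)[OF Den_l_atD(1)[OF assms]] by force
  have one_notin: "1 \<notin> \<aa>"
    using Den_l_atD(3)[OF assms] left_oreD(2)[OF Den_l_atD(1)[OF assms]] by force
  have ore: "\<exists>v\<in>?M. \<exists>r'. v * r = r' * u" if u: "u \<in> ?U" for u r
  proof -
    from u obtain X where X: "X \<in> Den_l_at \<aa>" "u \<in> X" by blast
    then show ?thesis using left_oreD(4)[OF Den_l_atD(1)[OF X(1)] X(2)] sub_M[OF X(1)] by blast
  qed
  have den: "\<exists>v\<in>?M. v * r = 0" if u: "u \<in> ?U" and ru: "r * u = 0" for u r
  proof -
    from u obtain X where X: "X \<in> Den_l_at \<aa>" "u \<in> X" by blast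
    then show ?thesis using Den_l_atD(2)[OF X(1) X(2) ru] sub_M[OF X(1)] by blast
  qed
  have "?M \<in> Den_l_at \<aa>" unfolding Den_l_at_iff
  proof (intro conjI allI ballI impI left_oreI)
    show "0 \<notin> ?M" using monoid_closure_cancel[of ?U \<aa> 0 1] cancel zero_in one_notin by auto
    show "\<exists>v\<in>?M. \<exists>r'. v * r = r' * m" if "m \<in> ?M" for r m
      using monoid_closure_left_ore[OF ore that] .
    show "\<exists>v\<in>?M. v * r = 0" if "m \<in> ?M" "r * m = 0" for r m
      using monoid_closure_left_den[OF den that] .
    show "r \<in> \<aa> \<longleftrightarrow> (\<exists>s\<in>?M. s * r = 0)" for r
    proof
      assume "r \<in> \<aa>"
      then show "\<exists>s\<in>?M. s * r = 0" using Den_l_atD(3)[OF assms] sub_M[OF assms] by blast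
    next
      assume "\<exists>s\<in>?M. s * r = 0"
      then obtain s where "s \<in> ?M" "s * r \<in> \<aa>" using zero_in by auto
      then show "r \<in> \<aa>" using monoid_closure_cancel[of ?U \<aa>] cancel by blast
    qed
  qed (auto intro: monoid_closure.intros monoid_closure_mult)
  then have "?M \<subseteq> ?U" by blast
  with monoid_closure_superset have "?M = ?U" by blast
  with \<open>?M \<in> Den_l_at \<aa>\<close> show ?thesis by simp
qed

lemma S_max_eq_Union:
  assumes "S \<in> Den_l_at \<aa>"
  shows "S_max \<aa> = \<Union>(Den_l_at \<aa>)"
  unfolding S_max_def using Union_Den_l_at[OF assms] by (intro the_equality) auto

lemma S_max_Den_l_at: "S \<in> Den_l_at \<aa> \<Longrightarrow> S_max \<aa> \<in> Den_l_at \<aa>"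
  by (simp add: S_max_eq_Union Union_Den_l_at)

lemma S_max_greatest: "S \<in> Den_l_at \<aa> \<Longrightarrow> S \<subseteq> S_max \<aa>"
  using S_max_eq_Union by blast

section \<open>Left localizations\<close>

lemma left_loc_ring_hom1: "left_loc \<sigma> S \<Longrightarrow> ring_hom1 \<sigma>"
  unfolding left_loc_def by simp

lemma left_loc_invertible: "left_loc \<sigma> S \<Longrightarrow> s \<in> S \<Longrightarrow> invertible (\<sigma> s)"
  unfolding left_loc_def invertible_def by blast

lemma left_loc_fraction: "left_loc \<sigma> S \<Longrightarrow> \<exists>s\<in>S. \<exists>r. \<sigma> s * q = \<sigma> r"
  unfolding left_loc_def by blast

lemma left_loc_kernel: "left_loc \<sigma> S \<Longrightarrow> \<sigma> r = 0 \<longleftrightarrow> r \<in> ass S"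
  unfolding left_loc_def by blast

lemma left_loc_eqD:
  assumes "left_loc \<sigma> S" "\<sigma> x = \<sigma> y"
  shows "\<exists>s\<in>S. s * x = s * y"
proof -
  have "\<sigma> (x - y) = 0" using assms by (simp add: ring_hom1_eqs[OF left_loc_ring_hom1[OF assms(1)]])
  then obtain s where "s \<in> S" "s * (x - y) = 0"
    using left_loc_kernel[OF assms(1)] unfolding ass_def by blast
  then show ?thesis by (auto simp: right_diff_distrib)
qed

lemma left_loc_nontrivial:
  assumes "left_loc (\<sigma> :: 'a::ring_1 \<Rightarrow> 'b::ring_1) S" "left_ore S"
  shows "(1::'b) \<noteq> 0"
proof
  assume "(1::'b) = 0"
  then have "\<sigma> 1 = \<sigma> 0" by (simp add: ring_hom1_eqs[OF left_loc_ring_hom1[OF assms(1)]])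
  then obtain s where "s \<in> S" "s * 1 = s * 0" using left_loc_eqD[OF assms(1)] by blast
  with left_oreD(2)[OF assms(2)] show False by simp
qed

lemma left_loc_common_denom:
  assumes "left_loc \<sigma> S" "left_ore S"
  shows "\<exists>s\<in>S. \<exists>x y. \<sigma> s * a = \<sigma> x \<and> \<sigma> s * b = \<sigma> y"
proof -
  note \<sigma> = ring_hom1_eqs[OF left_loc_ring_hom1[OF assms(1)]]
  obtain s1 x1 where 1: "s1 \<in> S" "\<sigma> s1 * a = \<sigma> x1" using left_loc_fraction[OF assms(1)] by blast
  obtain s2 x2 where 2: "s2 \<in> S" "\<sigma> s2 * b = \<sigma> x2" using left_loc_fraction[OF assms(1)] by blast
  obtain u y where u: "u \<in> S" "u * s1 = y * s2" using left_oreD(4)[OF assms(2) 2(1)] by blast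
  have "\<sigma> (u * s1) * a = \<sigma> (u * x1)" using 1(2) by (simp add: \<sigma> mult.assoc)
  moreover have "\<sigma> (u * s1) * b = \<sigma> (y * x2)" using 2(2) u(2) by (simp add: \<sigma> mult.assoc)
  ultimately show ?thesis using left_oreD(3)[OF assms(2) u(1) 1(1)] by blast
qed

lemma left_loc_hom_ext:
  assumes "left_loc \<sigma> S" "ring_hom1 \<phi>" "ring_hom1 \<psi>" "\<And>r. \<phi> (\<sigma> r) = \<psi> (\<sigma> r)"
  shows "\<phi> = \<psi>"
proof
  fix q
  obtain s r where sr: "s \<in> S" "\<sigma> s * q = \<sigma> r" using left_loc_fraction[OF assms(1)] by blast
  have "\<phi> (\<sigma> s) * \<phi> q = \<phi> (\<sigma> r)" using sr(2) by (simp add: ring_hom1_eqs[OF assms(2), symmetric])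
  also have "\<dots> = \<psi> (\<sigma> s) * \<psi> q" using sr(2) assms(4) by (simp add: ring_hom1_eqs[OF assms(3), symmetric])
  finally have "\<phi> (\<sigma> s) * \<phi> q = \<phi> (\<sigma> s) * \<psi> q" using assms(4) by simp
  moreover have "invertible (\<phi> (\<sigma> s))"
    using ring_hom1_invertible[OF assms(2) left_loc_invertible[OF assms(1) sr(1)]] .
  ultimately show "\<phi> q = \<psi> q" using invertible_cancel_left by blast
qed

text \<open>The map induced on \<open>S\<^sup>-\<^sup>1R\<close> by a ring homomorphism \<open>f\<close> inverting \<open>S\<close>:
  \<open>\<sigma>(s)\<^sup>-\<^sup>1\<sigma>(r) \<mapsto> f(s)\<^sup>-\<^sup>1f(r)\<close>.\<close>
definition loc_lift :: "('a::ring_1 \<Rightarrow> 'b::ring_1) \<Rightarrow> 'a set \<Rightarrow> ('a \<Rightarrow> 'c::ring_1) \<Rightarrow> 'b \<Rightarrow> 'c" where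
  "loc_lift \<sigma> S f b = (THE c. \<forall>s\<in>S. \<forall>r. \<sigma> s * b = \<sigma> r \<longrightarrow> f s * c = f r)"

context
  fixes \<sigma> :: "'a::ring_1 \<Rightarrow> 'b::ring_1" and S :: "'a set" and f :: "'a \<Rightarrow> 'c::ring_1"
  assumes loc: "left_loc \<sigma> S" and ore: "left_ore S" and hom: "ring_hom1 f"
    and inv: "\<And>s. s \<in> S \<Longrightarrow> invertible (f s)"
begin

lemma loc_lift_respects:
  assumes "\<sigma> x = \<sigma> y"
  shows "f x = f y"
proof -
  obtain s where "s \<in> S" "s * x = s * y" using left_loc_eqD[OF loc assms] by blast
  then show ?thesis
    using invertible_cancel_left[OF inv] by (metis ring_hom1_eqs(3)[OF hom])
qed

lemma loc_lift_unique: "\<exists>!c. \<forall>s\<in>S. \<forall>r. \<sigma> s * b = \<sigma> r \<longrightarrow> f s * c = f r"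
proof -
  note \<sigma> = ring_hom1_eqs[OF left_loc_ring_hom1[OF loc]] and f = ring_hom1_eqs[OF hom]
  obtain s0 r0 where s0: "s0 \<in> S" "\<sigma> s0 * b = \<sigma> r0" using left_loc_fraction[OF loc] by blast
  obtain u0 where u0: "u0 * f s0 = 1" "f s0 * u0 = 1" using inv[OF s0(1)] unfolding invertible_def by blast
  have "f s * (u0 * f r0) = f r" if s: "s \<in> S" "\<sigma> s * b = \<sigma> r" for s r
  proof -
    obtain u x where u: "u \<in> S" "u * s = x * s0" using left_oreD(4)[OF ore s0(1)] by blast
    have "\<sigma> (u * r) = \<sigma> u * (\<sigma> s * b)" using s(2) by (simp add: \<sigma>)
    also have "\<dots> = \<sigma> x * (\<sigma> s0 * b)"
      using arg_cong[OF u(2), of \<sigma>] by (simp add: \<sigma> mult.assoc[symmetric])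
    also have "\<dots> = \<sigma> (x * r0)" using s0(2) by (simp add: \<sigma>)
    finally have "f (u * r) = f (x * r0)" by (rule loc_lift_respects)
    then have "f u * f r = f x * (f s0 * u0) * f r0" using u0(2) by (simp add: f)
    also have "\<dots> = f u * (f s * (u0 * f r0))"
      using arg_cong[OF u(2), of f] by (simp add: f mult.assoc[symmetric])
    finally show ?thesis using invertible_cancel_left[OF inv[OF u(1)]] by simp
  qed
  moreover have "c = c'" if "f s0 * c = f r0" "f s0 * c' = f r0" for c c'
    using that invertible_cancel_left[OF inv[OF s0(1)], of c c'] by simp
  ultimately show ?thesis using s0 by blast
qed

lemma loc_lift_eq: "s \<in> S \<Longrightarrow> \<sigma> s * b = \<sigma> r \<Longrightarrow> f s * loc_lift \<sigma> S f b = f r"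
  using theI'[OF loc_lift_unique] unfolding loc_lift_def by blast

lemma loc_lift_comp: "loc_lift \<sigma> S f (\<sigma> r) = f r"
proof -
  note \<sigma> = ring_hom1_eqs[OF left_loc_ring_hom1[OF loc]] and f = ring_hom1_eqs[OF hom]
  have "f s * f r = f r'" if "\<sigma> s * \<sigma> r = \<sigma> r'" for s r'
    using loc_lift_respects[of "s * r" r'] that by (simp add: \<sigma> f)
  then show ?thesis unfolding loc_lift_def by (intro the1_equality[OF loc_lift_unique]) blast
qed

lemma loc_lift_add: "loc_lift \<sigma> S f (a + b) = loc_lift \<sigma> S f a + loc_lift \<sigma> S f b"
proof -
  note \<sigma> = ring_hom1_eqs[OF left_loc_ring_hom1[OF loc]] and f = ring_hom1_eqs[OF hom]
  obtain s x y where s: "s \<in> S" "\<sigma> s * a = \<sigma> x" "\<sigma> s * b = \<sigma> y"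
    using left_loc_common_denom[OF loc ore] by blast
  have "\<sigma> s * (a + b) = \<sigma> (x + y)" using s by (simp add: \<sigma> distrib_left)
  then have "f s * loc_lift \<sigma> S f (a + b) = f s * (loc_lift \<sigma> S f a + loc_lift \<sigma> S f b)"
    using loc_lift_eq[OF s(1)] s by (simp add: f distrib_left)
  then show ?thesis using invertible_cancel_left[OF inv[OF s(1)]] by blast
qed

lemma loc_lift_mult: "loc_lift \<sigma> S f (a * b) = loc_lift \<sigma> S f a * loc_lift \<sigma> S f b"
proof -
  note \<sigma> = ring_hom1_eqs[OF left_loc_ring_hom1[OF loc]] and f = ring_hom1_eqs[OF hom]
  let ?g = "loc_lift \<sigma> S f"
  obtain s1 x1 where 1: "s1 \<in> S" "\<sigma> s1 * a = \<sigma> x1" using left_loc_fraction[OF loc] by blast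
  obtain s2 x2 where 2: "s2 \<in> S" "\<sigma> s2 * b = \<sigma> x2" using left_loc_fraction[OF loc] by blast
  obtain u y where u: "u \<in> S" "u * x1 = y * s2" using left_oreD(4)[OF ore 2(1)] by blast
  have us1: "u * s1 \<in> S" using left_oreD(3)[OF ore u(1) 1(1)] .
  have "\<sigma> (u * s1) * (a * b) = \<sigma> u * (\<sigma> s1 * a) * b" by (simp add: \<sigma> mult.assoc)
  also have "\<dots> = \<sigma> y * (\<sigma> s2 * b)"
    using 1(2) arg_cong[OF u(2), of \<sigma>] by (simp add: \<sigma> mult.assoc[symmetric])
  also have "\<dots> = \<sigma> (y * x2)" using 2(2) by (simp add: \<sigma>)
  finally have "f (u * s1) * ?g (a * b) = f (y * x2)" by (rule loc_lift_eq[OF us1])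
  also have "\<dots> = f (y * s2) * ?g b" using loc_lift_eq[OF 2] by (simp add: f mult.assoc)
  also have "\<dots> = f u * (f s1 * ?g a) * ?g b" using loc_lift_eq[OF 1] u(2)[symmetric] by (simp add: f)
  also have "\<dots> = f (u * s1) * (?g a * ?g b)" by (simp add: f mult.assoc)
  finally show ?thesis using invertible_cancel_left[OF inv[OF us1]] by blast
qed

lemma loc_lift_ring_hom1: "ring_hom1 (loc_lift \<sigma> S f)"
proof -
  have "loc_lift \<sigma> S f 1 = 1"
    using loc_lift_comp[of 1] ring_hom1_eqs(1)[OF hom] ring_hom1_eqs(1)[OF left_loc_ring_hom1[OF loc]]
    by simp
  then show ?thesis unfolding ring_hom1_def using loc_lift_add loc_lift_mult by blast
qed

lemma loc_lift_inj:
  assumes "\<And>r. f r = 0 \<Longrightarrow> \<sigma> r = 0"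
  shows "inj (loc_lift \<sigma> S f)"
proof (rule ring_hom1_injI[OF loc_lift_ring_hom1])
  fix q assume q: "loc_lift \<sigma> S f q = 0"
  obtain s r where s: "s \<in> S" "\<sigma> s * q = \<sigma> r" using left_loc_fraction[OF loc] by blast
  then have "\<sigma> r = 0" using assms loc_lift_eq[OF s] q by simp
  with s have "\<sigma> s * q = \<sigma> s * 0" by simp
  then show "q = 0" using invertible_cancel_left[OF left_loc_invertible[OF loc s(1)]] by blast
qed

end

lemma left_loc_iso_of_invertible:
  fixes \<sigma> :: "'a::ring_1 \<Rightarrow> 'b::ring_1" and \<tau> :: "'a \<Rightarrow> 'c::ring_1"
  assumes \<sigma>: "left_loc \<sigma> S" "left_ore S" and \<tau>: "left_loc \<tau> T" "left_ore T"
    and \<sigma>_inv: "\<And>t. t \<in> T \<Longrightarrow> invertible (\<sigma> t)" and \<tau>_inv: "\<And>s. s \<in> S \<Longrightarrow> invertible (\<tau> s)"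
  shows "\<exists>\<phi>. ring_iso1 \<phi> \<and> (\<forall>r. \<phi> (\<sigma> r) = \<tau> r)"
proof -
  let ?\<phi> = "loc_lift \<sigma> S \<tau>" and ?\<psi> = "loc_lift \<tau> T \<sigma>"
  note \<phi>_facts = loc_lift_ring_hom1 loc_lift_comp
  have \<phi>: "ring_hom1 ?\<phi>" "\<And>r. ?\<phi> (\<sigma> r) = \<tau> r"
    using \<phi>_facts[OF \<sigma> left_loc_ring_hom1[OF \<tau>(1)] \<tau>_inv] by blast+
  have \<psi>: "ring_hom1 ?\<psi>" "\<And>r. ?\<psi> (\<tau> r) = \<sigma> r"
    using \<phi>_facts[OF \<tau> left_loc_ring_hom1[OF \<sigma>(1)] \<sigma>_inv] by blast+
  have "?\<psi> \<circ> ?\<phi> = id"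
    by (rule left_loc_hom_ext[OF \<sigma>(1)]) (simp_all add: \<phi> \<psi> ring_hom1_comp ring_hom1_id)
  moreover have "?\<phi> \<circ> ?\<psi> = id"
    by (rule left_loc_hom_ext[OF \<tau>(1)]) (simp_all add: \<phi> \<psi> ring_hom1_comp ring_hom1_id)
  ultimately have "bij ?\<phi>" using o_bij by blast
  with \<phi> show ?thesis unfolding ring_iso1_def by blast
qed

lemma left_loc_iso_iff_invertible:
  fixes \<sigma> :: "'a::ring_1 \<Rightarrow> 'b::ring_1" and \<tau> :: "'a \<Rightarrow> 'c::ring_1"
  assumes "left_loc \<sigma> S" "left_ore S" "left_loc \<tau> T" "left_ore T" "S \<subseteq> T"
  shows "(\<exists>\<phi> :: 'b \<Rightarrow> 'c. ring_iso1 \<phi> \<and> (\<forall>r. \<phi> (\<sigma> r) = \<tau> r)) \<longleftrightarrow> (\<forall>t\<in>T. invertible (\<sigma> t))"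
proof
  assume "\<exists>\<phi> :: 'b \<Rightarrow> 'c. ring_iso1 \<phi> \<and> (\<forall>r. \<phi> (\<sigma> r) = \<tau> r)"
  then obtain \<phi> :: "'b \<Rightarrow> 'c" where "ring_iso1 \<phi>" "\<And>r. \<phi> (\<sigma> r) = \<tau> r" by blast
  then show "\<forall>t\<in>T. invertible (\<sigma> t)"
    using left_loc_invertible[OF assms(3)] ring_iso1_invertible_iff by metis
next
  assume "\<forall>t\<in>T. invertible (\<sigma> t)"
  then show "\<exists>\<phi> :: 'b \<Rightarrow> 'c. ring_iso1 \<phi> \<and> (\<forall>r. \<phi> (\<sigma> r) = \<tau> r)"
    using left_loc_iso_of_invertible[OF assms(1-4)] left_loc_invertible[OF assms(3)] assms(5)
    by blast
qed

lemma left_loc_id: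
  assumes "V \<in> Den_l_at {0}" "\<And>v. v \<in> V \<Longrightarrow> invertible v"
  shows "left_loc id V"
  unfolding left_loc_def
proof (intro conjI ballI allI)
  show "\<exists>s\<in>V. \<exists>r. id s * q = id r" for q
    using left_oreD(1)[OF Den_l_atD(1)[OF assms(1)]] by force
  show "id r = 0 \<longleftrightarrow> r \<in> ass V" for r :: 'a
    using Den_l_at_ass[OF assms(1)] by simp
qed (use assms(2) ring_hom1_id in \<open>auto simp: invertible_def\<close>)

lemma left_loc_ring_iso1_iff:
  assumes "left_loc \<rho> W" "W \<in> Den_l_at {0}"
  shows "ring_iso1 \<rho> \<longleftrightarrow> (\<forall>w\<in>W. invertible w)"
proof
  assume "ring_iso1 \<rho>"
  then show "\<forall>w\<in>W. invertible w"
    using left_loc_invertible[OF assms(1)] ring_iso1_invertible_iff by blast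
next
  assume inv: "\<forall>w\<in>W. invertible w"
  have ore: "left_ore W" using Den_l_atD(1)[OF assms(2)] .
  have "left_loc id W" using left_loc_id[OF assms(2)] inv by blast
  then have "\<exists>\<phi>. ring_iso1 \<phi> \<and> (\<forall>r. \<phi> (id r) = \<rho> r)"
    by (rule left_loc_iso_of_invertible[OF _ ore assms(1) ore])
      (use inv left_loc_invertible[OF assms(1)] in auto)
  then obtain \<phi> where "ring_iso1 \<phi>" "\<And>r. \<phi> r = \<rho> r" by auto
  moreover from this(2) have "\<phi> = \<rho>" by auto
  ultimately show "ring_iso1 \<rho>" by simp
qed

text \<open>\<open>S\<^sup>-\<^sup>1R\<close> embeds into \<open>T\<^sup>-\<^sup>1R\<close> (both localizations have kernel \<open>\<aa>\<close>), where \<open>T\<close>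
  becomes invertible; so the image of \<open>T\<close> consists of regular elements of \<open>S\<^sup>-\<^sup>1R\<close>.\<close>
lemma image_Den_l_at_zero:
  assumes \<sigma>: "left_loc \<sigma> S" and \<tau>: "left_loc \<tau> T"
    and S: "S \<in> Den_l_at \<aa>" and T: "T \<in> Den_l_at \<aa>" and "S \<subseteq> T"
  shows "\<sigma> ` T \<in> Den_l_at {0}"
proof -
  note oreS = Den_l_atD(1)[OF S] and oreT = Den_l_atD(1)[OF T]
  note h\<sigma> = ring_hom1_eqs[OF left_loc_ring_hom1[OF \<sigma>]]
  have ker: "\<sigma> r = 0 \<longleftrightarrow> r \<in> \<aa>" "\<tau> r = 0 \<longleftrightarrow> r \<in> \<aa>" for r
    using left_loc_kernel[OF \<sigma>] left_loc_kernel[OF \<tau>] Den_l_at_ass[OF S] Den_l_at_ass[OF T] by auto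
  let ?\<phi> = "loc_lift \<sigma> S \<tau>"
  have \<tau>_inv: "invertible (\<tau> t)" if "t \<in> T" for t using left_loc_invertible[OF \<tau> that] .
  have "invertible (\<tau> s)" if "s \<in> S" for s using \<tau>_inv that \<open>S \<subseteq> T\<close> by blast
  note \<phi>_args = \<sigma> oreS left_loc_ring_hom1[OF \<tau>] this
  note h\<phi> = ring_hom1_eqs[OF loc_lift_ring_hom1[OF \<phi>_args]]
  have \<phi>\<sigma>: "?\<phi> (\<sigma> r) = \<tau> r" for r using loc_lift_comp[OF \<phi>_args] .
  have "inj ?\<phi>" using loc_lift_inj[OF \<phi>_args] ker by blast
  have regular: "q = 0" if "t \<in> T" "\<sigma> t * q = 0 \<or> q * \<sigma> t = 0" for t q
  proof -
    have "\<tau> t * ?\<phi> q = 0 \<or> ?\<phi> q * \<tau> t = 0"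
      using that(2)
    proof
      assume "\<sigma> t * q = 0"
      then have "?\<phi> (\<sigma> t * q) = 0" by (simp add: h\<phi>)
      then show ?thesis by (simp add: h\<phi> \<phi>\<sigma>)
    next
      assume "q * \<sigma> t = 0"
      then have "?\<phi> (q * \<sigma> t) = 0" by (simp add: h\<phi>)
      then show ?thesis by (simp add: h\<phi> \<phi>\<sigma>)
    qed
    then have "?\<phi> q = ?\<phi> 0"
      using invertible_mult_eq_0_iff[OF \<tau>_inv[OF that(1)]] by (auto simp: h\<phi>)
    then show ?thesis using \<open>inj ?\<phi>\<close> by (simp add: inj_eq)
  qed
  have "left_ore (\<sigma> ` T)"
  proof (rule left_oreI)
    show "1 \<in> \<sigma> ` T" using left_oreD(1)[OF oreT] h\<sigma>(1) by force
    show "0 \<notin> \<sigma> ` T"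
    proof
      assume "0 \<in> \<sigma> ` T"
      then obtain t where t: "t \<in> T" "t \<in> \<aa>" using ker by auto
      then obtain t' where "t' \<in> T" "t' * t = 0" using Den_l_atD(3)[OF T] by blast
      with t(1) show False using left_oreD(2,3)[OF oreT] by metis
    qed
    show "a * b \<in> \<sigma> ` T" if "a \<in> \<sigma> ` T" "b \<in> \<sigma> ` T" for a b
      using that left_oreD(3)[OF oreT] by (auto simp: h\<sigma>(3)[symmetric])
    show "\<exists>v'\<in>\<sigma> ` T. \<exists>q'. v' * q = q' * v" if v: "v \<in> \<sigma> ` T" for q v
    proof -
      obtain t where t: "t \<in> T" "v = \<sigma> t" using v by blast
      obtain s r where sr: "s \<in> S" "\<sigma> s * q = \<sigma> r" using left_loc_fraction[OF \<sigma>] by blast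
      obtain t' r' where tr: "t' \<in> T" "t' * r = r' * t" using left_oreD(4)[OF oreT t(1)] by blast
      have "\<sigma> (t' * s) * q = \<sigma> r' * v"
        using sr(2) arg_cong[OF tr(2), of \<sigma>] t(2) by (simp add: h\<sigma> mult.assoc)
      moreover have "t' * s \<in> T" using left_oreD(3)[OF oreT tr(1)] sr(1) \<open>S \<subseteq> T\<close> by blast
      ultimately show ?thesis by blast
    qed
  qed
  then show ?thesis unfolding Den_l_at_zero_iff using regular by blast
qed

lemma preimage_Den_l_at:
  assumes \<sigma>: "left_loc \<sigma> S" and S: "S \<in> Den_l_at \<aa>"
    and W: "W \<in> Den_l_at {0}" and "\<sigma> ` S \<subseteq> W"
  shows "\<sigma> -` W \<in> Den_l_at \<aa>"
proof -
  note oreS = Den_l_atD(1)[OF S] and oreW = Den_l_atD(1)[OF W]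
  note h\<sigma> = ring_hom1_eqs[OF left_loc_ring_hom1[OF \<sigma>]]
  have regular: "b = 0" if "w \<in> W" "w * b = 0 \<or> b * w = 0" for w b
    using W that unfolding Den_l_at_zero_iff by blast
  have ker: "\<sigma> r = 0 \<longleftrightarrow> (\<exists>s\<in>S. s * r = 0)" for r
    using left_loc_kernel[OF \<sigma>] unfolding ass_def by blast
  have SW: "S \<subseteq> \<sigma> -` W" using \<open>\<sigma> ` S \<subseteq> W\<close> by blast
  have ore: "\<exists>t'\<in>\<sigma> -` W. \<exists>r'. t' * r = r' * t" if t: "t \<in> \<sigma> -` W" for r t
  proof -
    obtain w b where wb: "w \<in> W" "w * \<sigma> r = b * \<sigma> t" using left_oreD(4)[OF oreW] t by blast
    obtain s y z where s: "s \<in> S" "\<sigma> s * b = \<sigma> y" "\<sigma> s * w = \<sigma> z"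
      using left_loc_common_denom[OF \<sigma> oreS] by blast
    have "\<sigma> (z * r) = \<sigma> s * (w * \<sigma> r)" using s(3) by (simp add: h\<sigma> mult.assoc[symmetric])
    also have "\<dots> = \<sigma> (y * t)" using wb(2) s(2) by (simp add: h\<sigma> mult.assoc[symmetric])
    finally obtain s' where s': "s' \<in> S" "(s' * z) * r = (s' * y) * t"
      using left_loc_eqD[OF \<sigma>] by (metis mult.assoc)
    have "\<sigma> (s' * z) = \<sigma> s' * (\<sigma> s * w)" using s(3) by (simp add: h\<sigma>)
    moreover have "\<sigma> s' * (\<sigma> s * w) \<in> W"
      using left_oreD(3)[OF oreW] SW s(1) s'(1) wb(1) by blast
    ultimately have "s' * z \<in> \<sigma> -` W" by simp
    with s'(2) show ?thesis by blast
  qed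
  show ?thesis unfolding Den_l_at_iff
  proof (intro conjI allI ballI impI left_oreI)
    show "\<exists>t'\<in>\<sigma> -` W. t' * r = 0" if "t \<in> \<sigma> -` W" "r * t = 0" for r t
    proof -
      have "\<sigma> r * \<sigma> t = 0" using that(2) by (simp add: h\<sigma>(3)[symmetric] h\<sigma>(4))
      then have "\<sigma> r = 0" using regular that(1) by blast
      then show ?thesis using ker SW by blast
    qed
    show "r \<in> \<aa> \<longleftrightarrow> (\<exists>t\<in>\<sigma> -` W. t * r = 0)" for r
    proof
      assume "r \<in> \<aa>"
      then show "\<exists>t\<in>\<sigma> -` W. t * r = 0" using Den_l_atD(3)[OF S] SW by blast
    next
      assume "\<exists>t\<in>\<sigma> -` W. t * r = 0"
      then obtain t where "\<sigma> t \<in> W" "\<sigma> t * \<sigma> r = 0" by (auto simp: h\<sigma>(3)[symmetric] h\<sigma>(4))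
      then have "\<sigma> r = 0" using regular by blast
      then show "r \<in> \<aa>" using ker Den_l_atD(3)[OF S] by blast
    qed
  qed (use ore left_oreD[OF oreW] in \<open>auto simp: h\<sigma>\<close>)
qed

lemma invertible_S_max_iff_invertible_S_0:
  fixes \<sigma> :: "'a::ring_1 \<Rightarrow> 'b::ring_1"
  assumes S: "S \<in> Den_l_at \<aa>" and \<sigma>: "left_loc \<sigma> S" and \<tau>: "left_loc \<tau> (S_max \<aa>)"
  shows "(\<forall>t\<in>S_max \<aa>. invertible (\<sigma> t)) \<longleftrightarrow> (\<forall>w\<in>(S_0 :: 'b set). invertible w)"
proof -
  let ?T = "S_max \<aa>" and ?W = "S_0 :: 'b set"
  have T: "?T \<in> Den_l_at \<aa>" using S_max_Den_l_at[OF S] .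
  have "{x::'b. invertible x} \<in> Den_l_at {0}"
    using invertibles_Den_l_at_zero left_loc_nontrivial[OF \<sigma> Den_l_atD(1)[OF S]] .
  then have W: "?W \<in> Den_l_at {0}" "{x::'b. invertible x} \<subseteq> ?W"
    using S_max_Den_l_at S_max_greatest by blast+
  have \<sigma>S: "\<sigma> ` S \<subseteq> ?W" using left_loc_invertible[OF \<sigma>] W(2) by blast
  show ?thesis
  proof
    assume inv: "\<forall>t\<in>?T. invertible (\<sigma> t)"
    have pre: "\<sigma> -` ?W \<subseteq> ?T" using S_max_greatest[OF preimage_Den_l_at[OF \<sigma> S W(1) \<sigma>S]] .
    show "\<forall>w\<in>?W. invertible w"
    proof
      fix w assume w: "w \<in> ?W"
      obtain s r where sr: "s \<in> S" "\<sigma> s * w = \<sigma> r" using left_loc_fraction[OF \<sigma>] by blast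
      have "\<sigma> r \<in> ?W" using left_oreD(3)[OF Den_l_atD(1)[OF W(1)]] \<sigma>S sr w by (metis image_subset_iff)
      then show "invertible w"
        using invertible_right_factor[OF left_loc_invertible[OF \<sigma> sr(1)]] inv pre sr(2) by auto
    qed
  next
    assume "\<forall>w\<in>?W. invertible w"
    moreover have "\<sigma> ` ?T \<subseteq> ?W"
      using S_max_greatest[OF image_Den_l_at_zero[OF \<sigma> \<tau> S T S_max_greatest[OF S]]] .
    ultimately show "\<forall>t\<in>?T. invertible (\<sigma> t)" by blast
  qed
qed

theorem theorem3p10:
  fixes \<aa> S :: "'a::ring_1 set"
    and \<sigma> :: "'a \<Rightarrow> 'b::ring_1"
    and \<tau> :: "'a \<Rightarrow> 'c::ring_1"
    and \<rho> :: "'b \<Rightarrow> 'd::ring_1"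
  assumes "\<aa> \<in> Ass_l"
    and "S \<in> Den_l_at \<aa>"
    and "left_loc \<sigma> S"
    and "left_loc \<tau> (S_max \<aa>)"
    and "left_loc \<rho> (S_0 :: 'b set)"
  shows "(\<exists>\<phi> :: 'b \<Rightarrow> 'c. ring_iso1 \<phi> \<and> (\<forall>r. \<phi> (\<sigma> r) = \<tau> r)) \<longleftrightarrow> ring_iso1 \<rho>"
proof -
  \<comment> \<open>The hypothesis \<open>\<aa> \<in> Ass_l\<close> is implied by \<open>S \<in> Den_l_at \<aa>\<close>.\<close>
  note S = assms(2) and \<sigma> = assms(3) and \<tau> = assms(4) and \<rho> = assms(5)
  note oreS = Den_l_atD(1)[OF S] and oreT = Den_l_atD(1)[OF S_max_Den_l_at[OF S]]
  have "(\<exists>\<phi> :: 'b \<Rightarrow> 'c. ring_iso1 \<phi> \<and> (\<forall>r. \<phi> (\<sigma> r) = \<tau> r))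
      \<longleftrightarrow> (\<forall>t\<in>S_max \<aa>. invertible (\<sigma> t))"
    using left_loc_iso_iff_invertible[OF \<sigma> oreS \<tau> oreT S_max_greatest[OF S]] .
  also have "\<dots> \<longleftrightarrow> (\<forall>w\<in>(S_0 :: 'b set). invertible w)"
    using invertible_S_max_iff_invertible_S_0[OF S \<sigma> \<tau>] .
  also have "\<dots> \<longleftrightarrow> ring_iso1 \<rho>"
  proof -
    have "(1::'b) \<noteq> 0" using left_loc_nontrivial[OF \<sigma> oreS] .
    then have "(S_0 :: 'b set) \<in> Den_l_at {0}" using S_max_Den_l_at invertibles_Den_l_at_zero by blast
    then show ?thesis using left_loc_ring_iso1_iff[OF \<rho>] by simp
  qed
  finally show ?thesis .
qed

end
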